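(* Let $\psi$ be the four-taxon network described in the context, with parameters $x,y>0$, $w=0$ and $\gamma\in[0,1]$, and one gene copy sampled per taxon. Under the multispecies network coalescent, as $x\to\infty$ the gene tree topology probabilities converge to: $P(((b,c),a),d)\to \gamma-(\gamma-\tfrac{\gamma^2}{3})e^{-y}$; $P(((b,c),d),a)\to (1-\gamma)-(\tfrac{2}{3}-\tfrac{\gamma}{3}-\tfrac{\gamma^2}{3})e^{-y}$; $P((a,b),(c,d))\to\gamma(1-\gamma)e^{-y}$ and $P((a,c),(b,d))\to\gamma(1-\gamma)e^{-y}$; $P(((a,b),c),d)\to\tfrac{\gamma^2}{3}e^{-y}$ and $P(((a,c),b),d)\to\tfrac{\gamma^2}{3}e^{-y}$; $P(a,(b,(c,d)))\to\tfrac{(1-\gamma)^2}{3}e^{-y}$ and $P(((b,d),c),a)\to\tfrac{(1-\gamma)^2}{3}e^{-y}$; and each of the remaining seven rooted gene tree topologies on $\{a,b,c,d\}$, namely $((a,d),(b,c))$, $(((a,b),d),c)$, $(b,(a,(c,d)))$, $(((a,d),b),c)$, $(((b,d),a),c)$, $(((a,c),d),b)$, $(((a,d),c),b)$, has probability converging to $0$.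
   Context: The network $\psi$ on taxa $A,B,C,D$ (gene copies $a,b,c,d$): the root $r$ has two children $p$ and $q$, with edges $(r,p)$ and $(r,q)$ both of length $x$. Node $p$ has children the leaf $A$ and a reticulation node $h$; node $q$ has children the leaf $D$ and $h$. The reticulation edges $(p,h)$ and $(q,h)$ have length $w=0$ and inheritance probabilities $\gamma$ and $1-\gamma$ respectively. Node $h$ has a single child $m$ via an edge of length $y$, and $m$ has the two leaf children $B$ and $C$. (Pendant edge lengths to leaves are irrelevant with one sample per taxon.) Multispecies network coalescent: gene lineages are traced backward in time from the leaves; within each branch every pair of lineages present coalesces independently at rate 1 per coalescent unit for the branch's duration; when a lineage reaches a reticulation node it independently enters the incoming edge $b$ with probability equal to its inheritance probability; above the root all remaining lineages coalesce. $P(g)$ is the resulting probability of gene tree topology $g$. *)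

theory Defs
  imports "HOL-Analysis.Analysis"
begin

text \<open>Rooted gene trees with leaves labelled by natural numbers
  (gene copies a = 0, b = 1, c = 2, d = 3).  A rooted topology is identified
  by its set of clusters, so the order of children is irrelevant.\<close>

datatype gtree = Lf nat | Nd gtree gtree

fun leaves :: "gtree \<Rightarrow> nat set" where
  "leaves (Lf i) = {i}"
| "leaves (Nd l r) = leaves l \<union> leaves r"

fun clusters :: "gtree \<Rightarrow> nat set set" where
  "clusters (Lf i) = {{i}}"
| "clusters (Nd l r) = insert (leaves l \<union> leaves r) (clusters l \<union> clusters r)"

definition same_topology :: "gtree \<Rightarrow> gtree \<Rightarrow> bool" where
  "same_topology s t \<longleftrightarrow> clusters s = clusters t"

definition ga :: gtree where "ga = Lf 0"
definition gb :: gtree where "gb = Lf 1"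
definition gc :: gtree where "gc = Lf 2"
definition gd :: gtree where "gd = Lf 3"

text \<open>A state is a list of lineages (the subtrees formed so far).
  The functions below compute expectations E[f(state)] of a test function f.\<close>

definition pairs :: "nat \<Rightarrow> (nat \<times> nat) list" where
  "pairs n = [(i, j). j \<leftarrow> [0..<n], i \<leftarrow> [0..<j]]"

definition merge :: "nat \<Rightarrow> nat \<Rightarrow> gtree list \<Rightarrow> gtree list" where
  "merge i j L = Nd (L ! i) (L ! j) # [L ! k. k \<leftarrow> [0..<length L], k \<noteq> i \<and> k \<noteq> j]"

text \<open>Total coalescence rate: every pair coalesces at rate 1.\<close>
definition crate :: "gtree list \<Rightarrow> real" where
  "crate L = real (length L choose 2)"

text \<open>Continuous-time coalescent on a branch of length t, defined by the
  first-jump decomposition: with no event before t (probability exp(-crate*t))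
  the state is unchanged; otherwise the first event is the coalescence of a
  given pair (i,j) at time s, with density exp(-crate*s) * 1, after which the
  process restarts for the remaining time t - s.  The nat argument is fuel
  (each event reduces the number of lineages).\<close>
primrec coalF :: "nat \<Rightarrow> real \<Rightarrow> (gtree list \<Rightarrow> real) \<Rightarrow> gtree list \<Rightarrow> real" where
  "coalF 0 t f L = f L"
| "coalF (Suc k) t f L =
     (if length L \<le> 1 then f L
      else exp (- crate L * t) * f L +
        (\<Sum>(i, j) \<leftarrow> pairs (length L).
           integral {0..t} (\<lambda>s. exp (- crate L * s) * coalF k (t - s) f (merge i j L))))"

definition coal :: "real \<Rightarrow> (gtree list \<Rightarrow> real) \<Rightarrow> gtree list \<Rightarrow> real" where
  "coal t f L = coalF (length L) t f L"

text \<open>Above the root all lineages coalesce (infinite branch): the successive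
  coalescing pairs are chosen uniformly among the current pairs (jump chain of
  the coalescent; each pair has rate 1).\<close>
primrec rootF :: "nat \<Rightarrow> (gtree list \<Rightarrow> real) \<Rightarrow> gtree list \<Rightarrow> real" where
  "rootF 0 f L = f L"
| "rootF (Suc k) f L =
     (if length L \<le> 1 then f L
      else (\<Sum>(i, j) \<leftarrow> pairs (length L). (1 / crate L) * rootF k f (merge i j L)))"

definition rootcoal :: "(gtree list \<Rightarrow> real) \<Rightarrow> gtree list \<Rightarrow> real" where
  "rootcoal f L = rootF (length L) f L"

text \<open>Reticulation: each lineage independently goes to the first parent with
  probability gamma and to the second with probability 1 - gamma.\<close>
definition reticulate :: "real \<Rightarrow> (gtree list \<Rightarrow> gtree list \<Rightarrow> real) \<Rightarrow> gtree list \<Rightarrow> real" where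
  "reticulate \<gamma> f L =
     (\<Sum>S \<in> Pow {0..<length L}.
        \<gamma> ^ card S * (1 - \<gamma>) ^ (length L - card S) *
        f (nths L S) (nths L ({0..<length L} - S)))"

definition is_topology :: "gtree \<Rightarrow> gtree list \<Rightarrow> real" where
  "is_topology g L = (case L of [T] \<Rightarrow> (if same_topology T g then 1 else 0) | _ \<Rightarrow> 0)"

text \<open>Probability of gene tree topology g under the MSNC on psi with
  parameters x (edges (r,p),(r,q)), y (edge (h,m)), w (edges (p,h),(q,h)) and
  inheritance probability gamma on (p,h).  Lineages b, c start at m, traverse
  (h,m), split at h; the p-part traverses (p,h) and joins a at p, the q-part
  traverses (q,h) and joins d at q; both traverse their edges to r and then
  coalesce above the root.\<close>
definition netP :: "real \<Rightarrow> real \<Rightarrow> real \<Rightarrow> real \<Rightarrow> gtree \<Rightarrow> real" where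
  "netP x y w \<gamma> g =
     coal y (\<lambda>Lh.
       reticulate \<gamma> (\<lambda>Lp Lq.
         coal w (\<lambda>Lp'.
           coal w (\<lambda>Lq'.
             coal x (\<lambda>Lrp.
               coal x (\<lambda>Lrq.
                 rootcoal (is_topology g) (Lrp @ Lrq))
               (Lq' @ [gd]))
             (Lp' @ [ga]))
           Lq)
         Lp)
       Lh)
     [gb, gc]"

end

(*
  As x grows, the lineages on each long edge (r,p), (r,q) coalesce completely before the root,
  so the limit only depends on how b and c leave the hybrid node and on the order of the
  coalescences on the long edges.  With probability e^-y, b and c reach h uncoalesced and split:
  if both go to p (probability gamma^2) the three lineages a, b, c on (r,p) coalesce in each of
  the three possible orders with probability 1/3; if they are separated (2 gamma (1 - gamma)) we
  get (a,b),(c,d) or (a,c),(b,d); both to q is symmetric.  With probability 1 - e^-y the lineage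
  (b,c) goes to p or q as a whole.  The limit is thus a law on eight topologies.
*)
theory Submission
  imports Defs "HOL-Real_Asymp.Real_Asymp"
begin

lemma coalF_time_zero: "coalF k 0 f L = f L"
  by (induction k arbitrary: f L) (auto simp: case_prod_unfold)

lemma coal_time_zero: "coal 0 f L = f L"
  by (simp add: coal_def coalF_time_zero)

lemma coal_singleton: "coal t f [A] = f [A]"
  by (simp add: coal_def)

lemma pairs_two: "pairs (Suc (Suc 0)) = [(0, Suc 0)]"
  by (simp add: pairs_def)

lemma pairs_three: "pairs (Suc (Suc (Suc 0))) = [(0, Suc 0), (0, Suc (Suc 0)), (Suc 0, Suc (Suc 0))]"
  by (simp add: pairs_def upt_rec)

lemma merge_two: "merge 0 (Suc 0) [A, B] = [Nd A B]"
  by (simp add: merge_def upt_rec)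

lemma merge_three:
  "merge 0 (Suc 0) [A, B, C] = [Nd A B, C]"
  "merge 0 (Suc (Suc 0)) [A, B, C] = [Nd A C, B]"
  "merge (Suc 0) (Suc (Suc 0)) [A, B, C] = [Nd B C, A]"
  by (simp_all add: merge_def upt_rec)

lemma crate_two: "crate [A, B] = 1"
  by (simp add: crate_def numeral_2_eq_2)

lemma crate_three: "crate [A, B, C] = 3"
  by (simp add: crate_def numeral_2_eq_2)

lemma has_integral_exp_decay:
  fixes c T :: real
  assumes "c \<noteq> 0" and "T \<ge> 0"
  shows "((\<lambda>u. exp (- (c * u))) has_integral (1 - exp (- (c * T))) / c) {0..T}"
proof -
  have "((\<lambda>u. exp (- (c * u))) has_integral (- exp (- (c * T)) / c - - exp (- (c * 0)) / c)) {0..T}"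
  proof (rule fundamental_theorem_of_calculus)
    fix u
    have "((\<lambda>u. - exp (- (c * u)) / c) has_real_derivative exp (- (c * u))) (at u within {0..T})"
      using assms(1) by (auto intro!: derivative_eq_intros)
    then show "((\<lambda>u. - exp (- (c * u)) / c) has_vector_derivative exp (- (c * u))) (at u within {0..T})"
      by (simp add: has_real_derivative_iff_has_vector_derivative)
  qed (use assms(2) in simp)
  then show ?thesis
    by (simp add: diff_divide_distrib)
qed

lemma coal_pair:
  assumes "t \<ge> 0"
  shows "coal t f [A, B] = exp (- t) * f [A, B] + (1 - exp (- t)) * f [Nd A B]"
proof -
  have "integral {0..t} (\<lambda>s. exp (- s) * f [Nd A B]) = (1 - exp (- t)) * f [Nd A B]"
    using has_integral_exp_decay[of 1 t] assms by (simp add: integral_mult_left integral_unique)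
  then show ?thesis
    by (simp add: coal_def crate_two pairs_two merge_two)
qed

definition first_merge_term :: "real \<Rightarrow> real \<Rightarrow> real \<Rightarrow> real" where
  "first_merge_term t P Q =
     exp (- t) * (P - Q) * (1 - exp (- (2 * t))) / 2 + Q * (1 - exp (- (3 * t))) / 3"

lemma integral_first_merge:
  fixes t P Q :: real
  assumes "t \<ge> 0"
  shows "integral {0..t} (\<lambda>s. exp (- (3 * s)) * (exp (- (t - s)) * P + (1 - exp (- (t - s))) * Q))
    = first_merge_term t P Q"
proof -
  have integrand: "exp (- (3 * s)) * (exp (- (t - s)) * P + (1 - exp (- (t - s))) * Q)
      = exp (- t) * (P - Q) * exp (- (2 * s)) + Q * exp (- (3 * s))" for s
  proof -
    have "exp (- (3 * s)) * exp (- (t - s)) = exp (- t) * exp (- (2 * s))"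
      by (simp add: exp_add [symmetric] algebra_simps)
    then show ?thesis
      by (simp add: algebra_simps)
  qed
  have "((\<lambda>s. exp (- t) * (P - Q) * exp (- (2 * s)) + Q * exp (- (3 * s))) has_integral
      exp (- t) * (P - Q) * ((1 - exp (- (2 * t))) / 2) + Q * ((1 - exp (- (3 * t))) / 3)) {0..t}"
    using assms by (intro has_integral_add has_integral_mult_right has_integral_exp_decay) auto
  then show ?thesis
    unfolding integrand first_merge_term_def by (simp add: integral_unique)
qed

lemma coal_triple:
  assumes "t \<ge> 0"
  shows "coal t f [A, B, C] = exp (- 3 * t) * f [A, B, C]
     + first_merge_term t (f [Nd A B, C]) (f [Nd (Nd A B) C])
     + first_merge_term t (f [Nd A C, B]) (f [Nd (Nd A C) B])
     + first_merge_term t (f [Nd B C, A]) (f [Nd (Nd B C) A])"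
proof -
  have "integral {0..t} (\<lambda>s. exp (- (3 * s)) * coal (t - s) f [X, Y])
     = first_merge_term t (f [X, Y]) (f [Nd X Y])" for X Y
  proof -
    have "integral {0..t} (\<lambda>s. exp (- (3 * s)) * coal (t - s) f [X, Y])
      = integral {0..t} (\<lambda>s. exp (- (3 * s)) * (exp (- (t - s)) * f [X, Y] + (1 - exp (- (t - s))) * f [Nd X Y]))"
      by (rule integral_cong) (simp add: coal_pair)
    then show ?thesis
      using integral_first_merge[OF assms] by simp
  qed
  then show ?thesis
    by (simp del: coalF.simps add: coal_def coalF.simps(2)[of "Suc (Suc 0)"] crate_three pairs_three merge_three)
qed

lemma first_merge_term_tendsto: "((\<lambda>t. first_merge_term t P Q) \<longlongrightarrow> Q / 3) at_top"
  unfolding first_merge_term_def by real_asymp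

lemma coal_pair_tendsto: "((\<lambda>t. coal t f [A, B]) \<longlongrightarrow> f [Nd A B]) at_top"
proof -
  have "((\<lambda>t. exp (- t) * f [A, B] + (1 - exp (- t)) * f [Nd A B]) \<longlongrightarrow> f [Nd A B]) at_top"
    by real_asymp
  moreover have "\<forall>\<^sub>F t in at_top. exp (- t) * f [A, B] + (1 - exp (- t)) * f [Nd A B] = coal t f [A, B]"
    using eventually_ge_at_top[of 0] by eventually_elim (simp add: coal_pair)
  ultimately show ?thesis
    by (rule Lim_transform_eventually)
qed

lemma coal_triple_tendsto:
  "((\<lambda>t. coal t f [A, B, C]) \<longlongrightarrow> (f [Nd (Nd A B) C] + f [Nd (Nd A C) B] + f [Nd (Nd B C) A]) / 3) at_top"
proof -
  let ?g = "\<lambda>t. exp (- 3 * t) * f [A, B, C]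
     + first_merge_term t (f [Nd A B, C]) (f [Nd (Nd A B) C])
     + first_merge_term t (f [Nd A C, B]) (f [Nd (Nd A C) B])
     + first_merge_term t (f [Nd B C, A]) (f [Nd (Nd B C) A])"
  have "((\<lambda>t::real. exp (- 3 * t)) \<longlongrightarrow> 0) at_top"
    by real_asymp
  then have "(?g \<longlongrightarrow> 0 * f [A, B, C] + f [Nd (Nd A B) C] / 3 + f [Nd (Nd A C) B] / 3 + f [Nd (Nd B C) A] / 3) at_top"
    by (intro tendsto_intros first_merge_term_tendsto)
  moreover have "\<forall>\<^sub>F t in at_top. ?g t = coal t f [A, B, C]"
    using eventually_ge_at_top[of 0] by eventually_elim (simp add: coal_triple)
  ultimately show ?thesis
    by (auto dest: Lim_transform_eventually simp: add_divide_distrib)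
qed

lemma coal_pair_pair_tendsto:
  "((\<lambda>t. coal t (\<lambda>L. coal t (h L) [B, D]) [A, C]) \<longlongrightarrow> h [Nd A C] [Nd B D]) at_top"
proof -
  let ?g = "\<lambda>t. exp (- t) * (exp (- t) * h [A, C] [B, D] + (1 - exp (- t)) * h [A, C] [Nd B D])
    + (1 - exp (- t)) * (exp (- t) * h [Nd A C] [B, D] + (1 - exp (- t)) * h [Nd A C] [Nd B D])"
  have "(?g \<longlongrightarrow> h [Nd A C] [Nd B D]) at_top"
    by real_asymp
  moreover have "\<forall>\<^sub>F t in at_top. ?g t = coal t (\<lambda>L. coal t (h L) [B, D]) [A, C]"
    using eventually_ge_at_top[of 0] by eventually_elim (simp add: coal_pair)
  ultimately show ?thesis
    by (rule Lim_transform_eventually)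
qed

lemma reticulate_singleton: "reticulate \<gamma> F [A] = \<gamma> * F [A] [] + (1 - \<gamma>) * F [] [A]"
proof -
  have "Pow {0::nat} = {{}, {0}}"
    by (auto simp: Pow_insert)
  then show ?thesis
    by (simp add: reticulate_def nths_Cons)
qed

lemma reticulate_pair:
  "reticulate \<gamma> F [A, B] = \<gamma>\<^sup>2 * F [A, B] [] + \<gamma> * (1 - \<gamma>) * F [A] [B]
     + \<gamma> * (1 - \<gamma>) * F [B] [A] + (1 - \<gamma>)\<^sup>2 * F [] [A, B]"
proof -
  have "Pow {0..<Suc (Suc 0)} = {{}, {0}, {Suc 0}, {0, Suc 0}}"
    by (auto simp: Pow_insert atLeast0LessThan lessThan_Suc insert_commute)
  then show ?thesis
    by (simp add: reticulate_def nths_Cons power2_eq_square)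
qed

lemma rootcoal_is_topology_pair:
  "rootcoal (is_topology g) [X, Y] = of_bool (same_topology (Nd X Y) g)"
  by (simp add: rootcoal_def crate_two pairs_two merge_two is_topology_def)

lemma netP_zero_hybrid_length:
  assumes "y \<ge> 0"
  shows "netP x y 0 \<gamma> g =
    exp (- y) * (\<gamma>\<^sup>2 * coal x (\<lambda>L. rootcoal (is_topology g) (L @ [gd])) [gb, gc, ga]
      + \<gamma> * (1 - \<gamma>) * coal x (\<lambda>L. coal x (\<lambda>L'. rootcoal (is_topology g) (L @ L')) [gc, gd]) [gb, ga]
      + \<gamma> * (1 - \<gamma>) * coal x (\<lambda>L. coal x (\<lambda>L'. rootcoal (is_topology g) (L @ L')) [gb, gd]) [gc, ga]
      + (1 - \<gamma>)\<^sup>2 * coal x (\<lambda>L. rootcoal (is_topology g) (ga # L)) [gb, gc, gd])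
    + (1 - exp (- y)) * (\<gamma> * coal x (\<lambda>L. rootcoal (is_topology g) (L @ [gd])) [Nd gb gc, ga]
      + (1 - \<gamma>) * coal x (\<lambda>L. rootcoal (is_topology g) (ga # L)) [Nd gb gc, gd])"
  using assms by (simp add: netP_def coal_time_zero coal_pair reticulate_pair reticulate_singleton coal_singleton)

definition topology_mass :: "(gtree \<times> real) list \<Rightarrow> gtree \<Rightarrow> real" where
  "topology_mass law g = (\<Sum>(T, p) \<leftarrow> law. p * of_bool (same_topology T g))"

definition limit_law :: "real \<Rightarrow> real \<Rightarrow> (gtree \<times> real) list" where
  "limit_law y \<gamma> =
    [(Nd (Nd (Nd gb gc) ga) gd, \<gamma> - (\<gamma> - \<gamma>\<^sup>2 / 3) * exp (- y)),
     (Nd (Nd (Nd gb ga) gc) gd, \<gamma>\<^sup>2 / 3 * exp (- y)),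
     (Nd (Nd (Nd gc ga) gb) gd, \<gamma>\<^sup>2 / 3 * exp (- y)),
     (Nd (Nd gb ga) (Nd gc gd), \<gamma> * (1 - \<gamma>) * exp (- y)),
     (Nd (Nd gc ga) (Nd gb gd), \<gamma> * (1 - \<gamma>) * exp (- y)),
     (Nd ga (Nd (Nd gb gc) gd), (1 - \<gamma>) - (2 / 3 - \<gamma> / 3 - \<gamma>\<^sup>2 / 3) * exp (- y)),
     (Nd ga (Nd (Nd gb gd) gc), (1 - \<gamma>)\<^sup>2 / 3 * exp (- y)),
     (Nd ga (Nd (Nd gc gd) gb), (1 - \<gamma>)\<^sup>2 / 3 * exp (- y))]"

lemma netP_tendsto_limit_law:
  assumes "y \<ge> 0"
  shows "((\<lambda>x. netP x y 0 \<gamma> g) \<longlongrightarrow> topology_mass (limit_law y \<gamma>) g) at_top"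
proof -
  let ?R = "rootcoal (is_topology g)"
  have "((\<lambda>x. netP x y 0 \<gamma> g) \<longlongrightarrow>
    exp (- y) * (\<gamma>\<^sup>2 * ((?R [Nd (Nd gb gc) ga, gd] + ?R [Nd (Nd gb ga) gc, gd] + ?R [Nd (Nd gc ga) gb, gd]) / 3)
      + \<gamma> * (1 - \<gamma>) * ?R [Nd gb ga, Nd gc gd]
      + \<gamma> * (1 - \<gamma>) * ?R [Nd gc ga, Nd gb gd]
      + (1 - \<gamma>)\<^sup>2 * ((?R [ga, Nd (Nd gb gc) gd] + ?R [ga, Nd (Nd gb gd) gc] + ?R [ga, Nd (Nd gc gd) gb]) / 3))
    + (1 - exp (- y)) * (\<gamma> * ?R [Nd (Nd gb gc) ga, gd] + (1 - \<gamma>) * ?R [ga, Nd (Nd gb gc) gd])) at_top"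
    unfolding netP_zero_hybrid_length[OF assms]
    by (intro tendsto_intros coal_triple_tendsto[THEN tendsto_eq_rhs]
        coal_pair_pair_tendsto[where h = "\<lambda>L L'. ?R (L @ L')", THEN tendsto_eq_rhs]
        coal_pair_tendsto[THEN tendsto_eq_rhs]) simp_all
  then show ?thesis
    by (rule tendsto_eq_rhs)
       (simp add: rootcoal_is_topology_pair topology_mass_def limit_law_def field_simps power2_eq_square)
qed

theorem mainTheorem2:
  fixes y \<gamma> :: real
  assumes "y > 0" and "0 \<le> \<gamma>" and "\<gamma> \<le> 1"
  shows
   "((\<lambda>x. netP x y 0 \<gamma> (Nd (Nd (Nd gb gc) ga) gd)) \<longlongrightarrow> \<gamma> - (\<gamma> - \<gamma>^2/3) * exp (-y)) at_top
  \<and> ((\<lambda>x. netP x y 0 \<gamma> (Nd (Nd (Nd gb gc) gd) ga)) \<longlongrightarrow> (1 - \<gamma>) - (2/3 - \<gamma>/3 - \<gamma>^2/3) * exp (-y)) at_top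
  \<and> ((\<lambda>x. netP x y 0 \<gamma> (Nd (Nd ga gb) (Nd gc gd))) \<longlongrightarrow> \<gamma> * (1 - \<gamma>) * exp (-y)) at_top
  \<and> ((\<lambda>x. netP x y 0 \<gamma> (Nd (Nd ga gc) (Nd gb gd))) \<longlongrightarrow> \<gamma> * (1 - \<gamma>) * exp (-y)) at_top
  \<and> ((\<lambda>x. netP x y 0 \<gamma> (Nd (Nd (Nd ga gb) gc) gd)) \<longlongrightarrow> \<gamma>^2/3 * exp (-y)) at_top
  \<and> ((\<lambda>x. netP x y 0 \<gamma> (Nd (Nd (Nd ga gc) gb) gd)) \<longlongrightarrow> \<gamma>^2/3 * exp (-y)) at_top
  \<and> ((\<lambda>x. netP x y 0 \<gamma> (Nd ga (Nd gb (Nd gc gd)))) \<longlongrightarrow> (1 - \<gamma>)^2/3 * exp (-y)) at_top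
  \<and> ((\<lambda>x. netP x y 0 \<gamma> (Nd (Nd (Nd gb gd) gc) ga)) \<longlongrightarrow> (1 - \<gamma>)^2/3 * exp (-y)) at_top
  \<and> ((\<lambda>x. netP x y 0 \<gamma> (Nd (Nd ga gd) (Nd gb gc))) \<longlongrightarrow> 0) at_top
  \<and> ((\<lambda>x. netP x y 0 \<gamma> (Nd (Nd (Nd ga gb) gd) gc)) \<longlongrightarrow> 0) at_top
  \<and> ((\<lambda>x. netP x y 0 \<gamma> (Nd gb (Nd ga (Nd gc gd)))) \<longlongrightarrow> 0) at_top
  \<and> ((\<lambda>x. netP x y 0 \<gamma> (Nd (Nd (Nd ga gd) gb) gc)) \<longlongrightarrow> 0) at_top
  \<and> ((\<lambda>x. netP x y 0 \<gamma> (Nd (Nd (Nd gb gd) ga) gc)) \<longlongrightarrow> 0) at_top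
  \<and> ((\<lambda>x. netP x y 0 \<gamma> (Nd (Nd (Nd ga gc) gd) gb)) \<longlongrightarrow> 0) at_top
  \<and> ((\<lambda>x. netP x y 0 \<gamma> (Nd (Nd (Nd ga gd) gc) gb)) \<longlongrightarrow> 0) at_top"
proof -
  note limit = netP_tendsto_limit_law[OF less_imp_le[OF assms(1)], of \<gamma>]
  \<comment> \<open>With \<open>set_eq_subset\<close>, simp decides equality of literal cluster sets (and of the
    clusters in them) by membership tests on numerals.\<close>
  show ?thesis
    by (intro conjI limit[THEN tendsto_eq_rhs])
       (simp_all add: topology_mass_def limit_law_def same_topology_def ga_def gb_def gc_def gd_def set_eq_subset)
qed

end
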